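(* Let $G$ be a finite block graph that is identifiable, i.e. $G$ has no pair of distinct vertices $u,v$ with $N[u]=N[v]$. Then $\gamma^{ID}(G)\leq n_Q(G)$, where $n_Q(G)$ denotes the number of maximal cliques of $G$.
   Context: A block graph is a graph in which every maximal 2-connected subgraph (block) is a clique. For a vertex $u$, $N(u)$ is its open neighborhood and $N[u]=N(u)\cup\{u\}$ its closed neighborhood. A set $C\subseteq V(G)$ is an identifying code (ID-code) if $N[u]\cap C\neq\emptyset$ for every vertex $u$ and $N[u]\cap C\neq N[v]\cap C$ for all distinct vertices $u,v$. A graph admits an ID-code iff it is identifiable (has no distinct $u,v$ with $N[u]=N[v]$). $\gamma^{ID}(G)$ is the minimum cardinality of an ID-code of $G$. $n_Q(G)$ is the number of maximal cliques of $G$. *)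

theory Defs
  imports Main
begin

definition simple_graph :: "'a set \<Rightarrow> ('a \<Rightarrow> 'a \<Rightarrow> bool) \<Rightarrow> bool" where
  "simple_graph V E \<longleftrightarrow> finite V \<and> (\<forall>u v. E u v \<longrightarrow> u \<in> V \<and> v \<in> V)
     \<and> (\<forall>u v. E u v \<longrightarrow> E v u) \<and> (\<forall>u. \<not> E u u)"

definition open_nbhd :: "'a set \<Rightarrow> ('a \<Rightarrow> 'a \<Rightarrow> bool) \<Rightarrow> 'a \<Rightarrow> 'a set" where
  "open_nbhd V E u = {v \<in> V. E u v}"

definition closed_nbhd :: "'a set \<Rightarrow> ('a \<Rightarrow> 'a \<Rightarrow> bool) \<Rightarrow> 'a \<Rightarrow> 'a set" where
  "closed_nbhd V E u = insert u (open_nbhd V E u)"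

text \<open>Connectivity of the subgraph induced by S (the empty set counts as connected).\<close>
definition induced_connected :: "('a \<Rightarrow> 'a \<Rightarrow> bool) \<Rightarrow> 'a set \<Rightarrow> bool" where
  "induced_connected E S \<longleftrightarrow>
     (\<forall>u\<in>S. \<forall>v\<in>S. (u, v) \<in> {(x, y). x \<in> S \<and> y \<in> S \<and> E x y}\<^sup>*)"

definition biconnected_set :: "'a set \<Rightarrow> ('a \<Rightarrow> 'a \<Rightarrow> bool) \<Rightarrow> 'a set \<Rightarrow> bool" where
  "biconnected_set V E S \<longleftrightarrow> S \<subseteq> V \<and> card S \<ge> 2 \<and> induced_connected E S
     \<and> (\<forall>x\<in>S. induced_connected E (S - {x}))"

definition is_block :: "'a set \<Rightarrow> ('a \<Rightarrow> 'a \<Rightarrow> bool) \<Rightarrow> 'a set \<Rightarrow> bool" where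
  "is_block V E S \<longleftrightarrow> biconnected_set V E S
     \<and> (\<forall>T. biconnected_set V E T \<and> S \<subseteq> T \<longrightarrow> T = S)"

definition is_clique :: "'a set \<Rightarrow> ('a \<Rightarrow> 'a \<Rightarrow> bool) \<Rightarrow> 'a set \<Rightarrow> bool" where
  "is_clique V E C \<longleftrightarrow> C \<subseteq> V \<and> (\<forall>u\<in>C. \<forall>v\<in>C. u \<noteq> v \<longrightarrow> E u v)"

definition block_graph :: "'a set \<Rightarrow> ('a \<Rightarrow> 'a \<Rightarrow> bool) \<Rightarrow> bool" where
  "block_graph V E \<longleftrightarrow> simple_graph V E \<and> (\<forall>S. is_block V E S \<longrightarrow> is_clique V E S)"

definition is_maximal_clique :: "'a set \<Rightarrow> ('a \<Rightarrow> 'a \<Rightarrow> bool) \<Rightarrow> 'a set \<Rightarrow> bool" where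
  "is_maximal_clique V E C \<longleftrightarrow> is_clique V E C
     \<and> (\<forall>D. is_clique V E D \<and> C \<subseteq> D \<longrightarrow> D = C)"

definition n_Q :: "'a set \<Rightarrow> ('a \<Rightarrow> 'a \<Rightarrow> bool) \<Rightarrow> nat" where
  "n_Q V E = card {C. is_maximal_clique V E C}"

definition identifiable :: "'a set \<Rightarrow> ('a \<Rightarrow> 'a \<Rightarrow> bool) \<Rightarrow> bool" where
  "identifiable V E \<longleftrightarrow>
     (\<forall>u\<in>V. \<forall>v\<in>V. u \<noteq> v \<longrightarrow> closed_nbhd V E u \<noteq> closed_nbhd V E v)"

definition is_id_code :: "'a set \<Rightarrow> ('a \<Rightarrow> 'a \<Rightarrow> bool) \<Rightarrow> 'a set \<Rightarrow> bool" where
  "is_id_code V E C \<longleftrightarrow> C \<subseteq> V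
     \<and> (\<forall>u\<in>V. closed_nbhd V E u \<inter> C \<noteq> {})
     \<and> (\<forall>u\<in>V. \<forall>v\<in>V. u \<noteq> v \<longrightarrow> closed_nbhd V E u \<inter> C \<noteq> closed_nbhd V E v \<inter> C)"

text \<open>Minimum cardinality of an ID-code (meaningful when one exists).\<close>
definition gamma_ID :: "'a set \<Rightarrow> ('a \<Rightarrow> 'a \<Rightarrow> bool) \<Rightarrow> nat" where
  "gamma_ID V E = (LEAST k. \<exists>C. is_id_code V E C \<and> card C = k)"

end

theory Submission
  imports Defs
begin

text \<open>
  Call C a twin-ID-code if it dominates every vertex and separates any two vertices with
  different closed neighbourhoods. Unlike ID-codes these exist in every graph, and in an
  identifiable graph they are exactly the ID-codes. In a block graph two neighbours of a vertex
  on a common cycle are adjacent, because the cycle lies in one block, which is a clique; unlike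
  being a block graph, this property passes to induced subgraphs. For graphs with this property
  a twin-ID-code with at most n_Q vertices is built by induction on the number of vertices.
  The first vertex v of a longest path has a closed twin or at most one neighbour. If v has a
  twin, a twin-ID-code of G - v is one of G. Otherwise N[v] is a maximal clique that does not
  survive in G - v, so n_Q drops, and one more vertex repairs the code: v itself, another
  neighbour of the neighbour p of v, or v together with a twin of p in G - v traded for p.
\<close>

section \<open>Closed neighbourhoods and twin-ID-codes\<close>

lemma closed_nbhd_iff: "x \<in> closed_nbhd V E u \<longleftrightarrow> x = u \<or> x \<in> V \<and> E u x"
  unfolding closed_nbhd_def open_nbhd_def by auto

lemma closed_nbhd_sym:
  "symp E \<Longrightarrow> x \<in> V \<Longrightarrow> y \<in> V \<Longrightarrow> x \<in> closed_nbhd V E y \<longleftrightarrow> y \<in> closed_nbhd V E x"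
  by (auto simp: closed_nbhd_iff dest: sympD)

lemma closed_nbhd_Diff: "y \<noteq> v \<Longrightarrow> closed_nbhd (V - {v}) E y = closed_nbhd V E y - {v}"
  by (auto simp: closed_nbhd_iff)

lemma closed_nbhd_eq_if_Diff_eq:
  assumes "closed_nbhd (V - {v}) E u = closed_nbhd (V - {v}) E w"
    and "v \<in> closed_nbhd V E u \<longleftrightarrow> v \<in> closed_nbhd V E w"
    and "u \<noteq> v" "w \<noteq> v"
  shows "closed_nbhd V E u = closed_nbhd V E w"
proof (rule set_eqI)
  fix x
  show "x \<in> closed_nbhd V E u \<longleftrightarrow> x \<in> closed_nbhd V E w"
  proof (cases "x = v")
    case False
    then show ?thesis
      using assms(1) closed_nbhd_Diff[OF assms(3), of V E] closed_nbhd_Diff[OF assms(4), of V E]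
      by (metis Diff_iff singletonD)
  qed (use assms(2) in simp)
qed

definition twin_id_code :: "'a set \<Rightarrow> ('a \<Rightarrow> 'a \<Rightarrow> bool) \<Rightarrow> 'a set \<Rightarrow> bool" where
  "twin_id_code V E C \<longleftrightarrow> C \<subseteq> V \<and> (\<forall>u\<in>V. closed_nbhd V E u \<inter> C \<noteq> {})
     \<and> (\<forall>u\<in>V. \<forall>w\<in>V. closed_nbhd V E u \<inter> C = closed_nbhd V E w \<inter> C
          \<longrightarrow> closed_nbhd V E u = closed_nbhd V E w)"

lemma twin_id_code_subset: "twin_id_code V E C \<Longrightarrow> C \<subseteq> V"
  by (simp add: twin_id_code_def)

lemma twin_id_code_dominating:
  "twin_id_code V E C \<Longrightarrow> u \<in> V \<Longrightarrow> closed_nbhd V E u \<inter> C \<noteq> {}"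
  by (simp add: twin_id_code_def)

lemma twin_id_code_separating:
  "twin_id_code V E C \<Longrightarrow> u \<in> V \<Longrightarrow> w \<in> V \<Longrightarrow>
    closed_nbhd V E u \<inter> C = closed_nbhd V E w \<inter> C \<Longrightarrow> closed_nbhd V E u = closed_nbhd V E w"
  by (simp add: twin_id_code_def)

lemma is_id_code_if_twin_id_code:
  "identifiable V E \<Longrightarrow> twin_id_code V E C \<Longrightarrow> is_id_code V E C"
  unfolding identifiable_def twin_id_code_def is_id_code_def by blast

section \<open>Cycles in block graphs\<close>

definition graph_path :: "'a set \<Rightarrow> ('a \<Rightarrow> 'a \<Rightarrow> bool) \<Rightarrow> 'a list \<Rightarrow> bool" where
  "graph_path V E xs \<longleftrightarrow> xs \<noteq> [] \<and> distinct xs \<and> set xs \<subseteq> V \<and> successively E xs"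

definition cycle_neighbours_adjacent :: "'a set \<Rightarrow> ('a \<Rightarrow> 'a \<Rightarrow> bool) \<Rightarrow> bool" where
  "cycle_neighbours_adjacent V E \<longleftrightarrow> (\<forall>v\<in>V. \<forall>xs. graph_path V E xs \<and> v \<notin> set xs
     \<and> E v (hd xs) \<and> E v (last xs) \<and> hd xs \<noteq> last xs \<longrightarrow> E (hd xs) (last xs))"

lemma cycle_neighbours_adjacentD:
  assumes "cycle_neighbours_adjacent V E" "graph_path V E xs" "v \<in> V" "v \<notin> set xs"
    "E v (hd xs)" "E v (last xs)" "hd xs \<noteq> last xs"
  shows "E (hd xs) (last xs)"
  using assms unfolding cycle_neighbours_adjacent_def by blast

lemma cycle_neighbours_adjacent_mono:
  "cycle_neighbours_adjacent V E \<Longrightarrow> W \<subseteq> V \<Longrightarrow> cycle_neighbours_adjacent W E"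
  unfolding cycle_neighbours_adjacent_def graph_path_def by blast

definition induced_rel :: "('a \<Rightarrow> 'a \<Rightarrow> bool) \<Rightarrow> 'a set \<Rightarrow> ('a \<times> 'a) set" where
  "induced_rel E S = {(x, y). x \<in> S \<and> y \<in> S \<and> E x y}"

lemma path_reachable_from_hd:
  "successively E xs \<Longrightarrow> set xs \<subseteq> S \<Longrightarrow> y \<in> set xs \<Longrightarrow> (hd xs, y) \<in> (induced_rel E S)\<^sup>*"
proof (induction xs)
  case (Cons x xs)
  show ?case
  proof (cases "y = x")
    case False
    with Cons.prems have "xs \<noteq> []" by auto
    with Cons.prems have "(x, hd xs) \<in> induced_rel E S"
      by (auto simp: induced_rel_def successively_Cons)
    with False Cons show ?thesis
      by (auto simp: successively_Cons intro: converse_rtrancl_into_rtrancl)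
  qed simp
qed simp

lemma induced_connected_if_reachable:
  assumes "symp E" and reach: "\<forall>u\<in>S. (c, u) \<in> (induced_rel E S)\<^sup>*"
  shows "induced_connected E S"
proof -
  have "sym ((induced_rel E S)\<^sup>*)"
    using \<open>symp E\<close> by (intro sym_rtrancl) (auto simp: sym_def induced_rel_def dest: sympD)
  then have "\<forall>u\<in>S. \<forall>w\<in>S. (u, w) \<in> (induced_rel E S)\<^sup>*"
    using reach by (meson rtrancl_trans symD)
  then show ?thesis
    by (simp add: induced_connected_def induced_rel_def)
qed

lemma induced_connected_path:
  "symp E \<Longrightarrow> successively E xs \<Longrightarrow> induced_connected E (set xs)"
  by (rule induced_connected_if_reachable[where c = "hd xs"]) (auto intro: path_reachable_from_hd)

lemma induced_connected_insert_paths: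
  assumes "symp E" "successively E ys" "successively E zs"
    and "ys \<noteq> [] \<Longrightarrow> E v (hd ys)" and "zs \<noteq> [] \<Longrightarrow> E v (last zs)"
  shows "induced_connected E (insert v (set ys \<union> set zs))" (is "induced_connected E ?S")
proof (rule induced_connected_if_reachable[OF \<open>symp E\<close>, of _ v], intro ballI)
  fix u assume "u \<in> ?S"
  then consider "u = v" | (ys) "u \<in> set ys" | (zs) "u \<in> set (rev zs)" by auto
  then show "(v, u) \<in> (induced_rel E ?S)\<^sup>*"
  proof cases
    case ys
    then have "ys \<noteq> []" by auto
    then have "(v, hd ys) \<in> induced_rel E ?S"
      using assms(4) by (auto simp: induced_rel_def)
    moreover have "(hd ys, u) \<in> (induced_rel E ?S)\<^sup>*"
      using ys assms(2) by (auto intro!: path_reachable_from_hd)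
    ultimately show ?thesis by (rule converse_rtrancl_into_rtrancl)
  next
    case zs
    then have "zs \<noteq> []" by auto
    then have "(v, hd (rev zs)) \<in> induced_rel E ?S"
      using assms(5) by (auto simp: induced_rel_def hd_rev)
    moreover have "successively E (rev zs)"
      using assms(1,3) by (auto intro: successively_mono dest: sympD)
    then have "(hd (rev zs), u) \<in> (induced_rel E ?S)\<^sup>*"
      using zs by (auto intro!: path_reachable_from_hd)
    ultimately show ?thesis by (rule converse_rtrancl_into_rtrancl)
  qed simp
qed

lemma biconnected_set_cycle:
  assumes "symp E" "graph_path V E xs" "v \<in> V" "v \<notin> set xs"
    and "E v (hd xs)" "E v (last xs)"
  shows "biconnected_set V E (insert v (set xs))" (is "biconnected_set V E ?S")
proof -
  from assms(2) have xs: "xs \<noteq> []" "distinct xs" "set xs \<subseteq> V" "successively E xs"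
    by (auto simp: graph_path_def)
  have "card ?S \<ge> 2"
    using xs(1) assms(4) by (simp add: card_gt_0_iff Suc_le_eq)
  moreover have "induced_connected E ?S"
    using induced_connected_insert_paths[OF assms(1) xs(4), of "[]" v] assms(5) by simp
  moreover have "induced_connected E (?S - {x})" if "x \<in> ?S" for x
  proof (cases "x = v")
    case True
    then have "?S - {x} = set xs" using assms(4) by auto
    then show ?thesis using induced_connected_path[OF assms(1) xs(4)] by simp
  next
    case False
    with that obtain ys zs where xs_eq: "xs = ys @ x # zs" by (auto dest: split_list)
    with xs(2) False have "?S - {x} = insert v (set ys \<union> set zs)" by auto
    moreover have "induced_connected E (insert v (set ys \<union> set zs))"
      using xs(4) assms(5,6) unfolding xs_eq
      by (intro induced_connected_insert_paths[OF assms(1)])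
        (auto simp: successively_append_iff successively_Cons)
    ultimately show ?thesis by simp
  qed
  ultimately show ?thesis
    using xs(3) assms(3) by (simp add: biconnected_set_def)
qed

lemma biconnected_set_subset_block:
  assumes "finite V" "biconnected_set V E S"
  shows "\<exists>B. is_block V E B \<and> S \<subseteq> B"
proof -
  have "{T. biconnected_set V E T} \<subseteq> Pow V" by (auto simp: biconnected_set_def)
  with assms(1) have "finite {T. biconnected_set V E T}" by (meson finite_Pow_iff finite_subset)
  from finite_has_maximal2[OF this, of S] assms(2) show ?thesis
    by (auto simp: is_block_def)
qed

lemma block_graph_cycle_neighbours_adjacent:
  assumes "block_graph V E"
  shows "cycle_neighbours_adjacent V E"
  unfolding cycle_neighbours_adjacent_def
proof (intro ballI allI impI, elim conjE)
  fix v xs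
  assume path: "graph_path V E xs" and "v \<in> V" "v \<notin> set xs" "E v (hd xs)" "E v (last xs)"
    and "hd xs \<noteq> last xs"
  have "finite V" "symp E"
    using assms by (auto simp: block_graph_def simple_graph_def symp_def)
  then obtain B where "is_block V E B" "insert v (set xs) \<subseteq> B"
    using biconnected_set_subset_block biconnected_set_cycle path \<open>v \<in> V\<close> \<open>v \<notin> set xs\<close>
      \<open>E v (hd xs)\<close> \<open>E v (last xs)\<close> by metis
  moreover have "hd xs \<in> set xs" "last xs \<in> set xs"
    using path by (auto simp: graph_path_def)
  moreover have "is_clique V E B"
    using assms \<open>is_block V E B\<close> by (simp add: block_graph_def)
  ultimately show "E (hd xs) (last xs)"
    using \<open>hd xs \<noteq> last xs\<close> unfolding is_clique_def by blast
qed

section \<open>Longest paths\<close>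

lemma graph_path_infix:
  "graph_path V E (xs @ ys @ zs) \<Longrightarrow> ys \<noteq> [] \<Longrightarrow> graph_path V E ys"
  by (auto simp: graph_path_def successively_append_iff)

lemma longest_graph_path_exists:
  assumes "finite V" "V \<noteq> {}"
  shows "\<exists>xs. graph_path V E xs \<and> (\<forall>ys. graph_path V E ys \<longrightarrow> length ys \<le> length xs)"
proof -
  obtain x where "x \<in> V" using assms(2) by blast
  then have "graph_path V E [x]" by (simp add: graph_path_def)
  moreover have "length ys < card V + 1" if "graph_path V E ys" for ys
  proof -
    from that have "distinct ys" "set ys \<subseteq> V" by (auto simp: graph_path_def)
    then have "length ys \<le> card V"
      by (metis card_mono[OF assms(1)] distinct_card)
    then show ?thesis by simp
  qed
  ultimately show ?thesis
    using Lattices_Big.ex_has_greatest_nat[of "graph_path V E" "[x]" length "card V + 1"] by blast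
qed

lemma longest_graph_path_start_neighbour:
  assumes "symp E" "graph_path V E (v # ys)"
    and longest: "\<forall>zs. graph_path V E zs \<longrightarrow> length zs \<le> length (v # ys)"
    and "a \<in> V" "E v a"
  shows "a \<in> set (v # ys)"
proof (rule ccontr)
  assume "a \<notin> set (v # ys)"
  with assms have "graph_path V E (a # v # ys)"
    by (auto simp: graph_path_def dest: sympD)
  with longest have "length (a # v # ys) \<le> length (v # ys)" by blast
  then show False by simp
qed

lemma path_start_adjacent_hd:
  assumes "symp E" "cycle_neighbours_adjacent V E" and path: "graph_path V E (v # p # zs)"
    and "w \<in> set zs" "E v w"
  shows "E v (hd zs)"
proof -
  obtain as w' bs where zs: "zs = as @ w' # bs" "E v w'" and first: "\<forall>y\<in>set as. \<not> E v y"
    using split_list_first_prop[of zs "E v"] assms(4,5) by blast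
  show ?thesis
  proof (cases as rule: rev_cases)
    case (snoc as' q)
    have "graph_path V E (v # p # as)"
      using graph_path_infix[of V E "[]" "v # p # as" "w' # bs"] path zs by simp
    moreover have "w' \<in> V" "w' \<notin> set (v # p # as)" "v \<noteq> q"
      using path zs snoc by (auto simp: graph_path_def)
    moreover have "successively E zs"
      using path by (auto simp: graph_path_def successively_Cons)
    then have "E w' q" "E w' v"
      using zs snoc assms(1) by (auto simp: successively_append_iff dest: sympD)
    ultimately have "E v q"
      using cycle_neighbours_adjacentD[OF assms(2), of "v # p # as" w'] snoc by simp
    with first snoc show ?thesis by simp
  qed (use zs in simp)
qed

lemma path_second_adjacent_start_neighbour:
  assumes "cycle_neighbours_adjacent V E" and path: "graph_path V E (v # p # zs)"
    and "z \<in> set zs" "E v z"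
  shows "E p z"
proof -
  obtain as bs where zs: "zs = as @ z # bs" using split_list assms(3) by metis
  have "graph_path V E (p # as @ [z])"
    using graph_path_infix[of V E "[v]" "p # as @ [z]" bs] path zs by simp
  moreover have "v \<in> V" "v \<notin> set (p # as @ [z])" "E v p" "p \<noteq> z"
    using path zs by (auto simp: graph_path_def)
  ultimately show ?thesis
    using cycle_neighbours_adjacentD[OF assms(1), of "p # as @ [z]" v] assms(4) by simp
qed

lemma path_start_adjacent_second_neighbour:
  assumes "symp E" "cycle_neighbours_adjacent V E" and path: "graph_path V E (v # p # zs)"
    and "E v (hd zs)" "z \<in> set zs" "E p z"
  shows "E v z"
proof -
  obtain as bs where zs: "zs = as @ z # bs" using split_list assms(5) by metis
  have "graph_path V E (as @ [z])"
    using graph_path_infix[of V E "[v, p]" "as @ [z]" bs] path zs by simp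
  moreover have "hd (as @ [z]) = hd zs"
    using zs by (cases as) auto
  ultimately have "successively E (v # as @ [z])"
    using assms(4) by (simp add: graph_path_def successively_Cons)
  then have "graph_path V E (v # as @ [z])"
    using path zs by (auto simp: graph_path_def)
  moreover have "p \<in> V" "p \<notin> set (v # as @ [z])" "E p v" "v \<noteq> z"
    using path zs assms(1) by (auto simp: graph_path_def dest: sympD)
  ultimately have "E (hd (v # as @ [z])) (last (v # as @ [z]))"
    using assms(6) by (intro cycle_neighbours_adjacentD[OF assms(2)]) auto
  then show ?thesis by simp
qed

lemma longest_graph_path_closed_twin:
  assumes "symp E" "irreflp E" "cycle_neighbours_adjacent V E"
    and path: "graph_path V E (v # p # zs)"
    and longest: "\<forall>ys. graph_path V E ys \<longrightarrow> length ys \<le> length (v # p # zs)"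
    and "w \<in> set zs" "E v w"
  shows "closed_nbhd V E p = closed_nbhd V E v"
proof -
  have on_path: "a \<in> set (p # zs)" if "a \<in> V" "E v a" for a
    using longest_graph_path_start_neighbour[OF assms(1) path longest that] that(2) assms(2)
    by (auto dest: irreflpD)
  have to_hd: "E v (hd zs)"
    by (rule path_start_adjacent_hd[OF assms(1,3) path assms(6,7)])
  have vp: "v \<in> V" "p \<in> V" "E v p" "E p v"
    using path assms(1) by (auto simp: graph_path_def dest: sympD)
  have to_p: "E p z" if "z \<in> V" "E v z" "z \<noteq> p" for z
    using on_path[OF that(1,2)] that(3) path_second_adjacent_start_neighbour[OF assms(3) path _ that(2)]
    by auto
  have to_v: "E v z" if "z \<in> V" "E p z" "z \<noteq> v" for z
  proof (cases "z \<in> set (p # zs)")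
    case True
    with that assms(2) have "z \<in> set zs" by (auto dest: irreflpD)
    then show ?thesis
      by (rule path_start_adjacent_second_neighbour[OF assms(1,3) path to_hd _ that(2)])
  next
    case False
    have "successively E (v # p # zs)" "distinct (v # p # zs)" "set (v # p # zs) \<subseteq> V"
      using path by (simp_all add: graph_path_def)
    moreover have "E z p"
      using that(2) assms(1) by (blast dest: sympD)
    ultimately have "graph_path V E (z # p # v # zs)"
      using False that(1,3) to_hd vp(4) by (cases zs) (auto simp: graph_path_def)
    with longest have "length (z # p # v # zs) \<le> length (v # p # zs)" by blast
    then show ?thesis by simp
  qed
  show ?thesis
  proof (rule set_eqI)
    fix z
    show "z \<in> closed_nbhd V E p \<longleftrightarrow> z \<in> closed_nbhd V E v"
      unfolding closed_nbhd_iff using to_p[of z] to_v[of z] vp by blast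
  qed
qed

lemma exists_twin_or_degree_le_1:
  assumes "finite V" "V \<noteq> {}" "symp E" "irreflp E" "cycle_neighbours_adjacent V E"
  shows "\<exists>v\<in>V. (\<exists>w\<in>V. w \<noteq> v \<and> closed_nbhd V E w = closed_nbhd V E v)
    \<or> (\<exists>p. open_nbhd V E v \<subseteq> {p})"
proof -
  obtain v ys where path: "graph_path V E (v # ys)"
    and longest: "\<forall>zs. graph_path V E zs \<longrightarrow> length zs \<le> length (v # ys)"
    using longest_graph_path_exists[OF assms(1,2), of E] by (metis graph_path_def neq_Nil_conv)
  have v: "v \<in> V" using path by (simp add: graph_path_def)
  show ?thesis
  proof (cases "\<exists>p. open_nbhd V E v \<subseteq> {p}")
    case False
    then obtain a b where "a \<in> open_nbhd V E v" "b \<in> open_nbhd V E v" "a \<noteq> b"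
      by blast
    then have ab: "a \<in> V" "b \<in> V" "E v a" "E v b" "a \<noteq> b"
      by (auto simp: open_nbhd_def)
    then have "a \<in> set ys" "b \<in> set ys"
      using longest_graph_path_start_neighbour[OF assms(3) path longest] assms(4)
      by (auto dest: irreflpD)
    then obtain p zs where ys: "ys = p # zs"
      by (cases ys) auto
    with ab \<open>a \<in> set ys\<close> \<open>b \<in> set ys\<close> obtain w where "w \<in> set zs" "E v w"
      by (metis set_ConsD)
    with assms(3-5) path longest ys have "closed_nbhd V E p = closed_nbhd V E v"
      by (intro longest_graph_path_closed_twin) simp_all
    moreover have "p \<in> V" "p \<noteq> v"
      using path ys by (auto simp: graph_path_def)
    ultimately show ?thesis using v by blast
  qed (use v in blast)
qed

section \<open>Maximal cliques under vertex deletion\<close>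

lemma clique_subset_maximal_clique:
  assumes "finite V" "is_clique V E D"
  shows "\<exists>Q. is_maximal_clique V E Q \<and> D \<subseteq> Q"
proof -
  have "{T. is_clique V E T} \<subseteq> Pow V" by (auto simp: is_clique_def)
  with assms(1) have "finite {T. is_clique V E T}" by (meson finite_Pow_iff finite_subset)
  from finite_has_maximal2[OF this, of D] assms(2) show ?thesis
    by (auto simp: is_maximal_clique_def)
qed

lemma finite_maximal_cliques: "finite V \<Longrightarrow> finite {Q. is_maximal_clique V E Q}"
  by (rule finite_subset[of _ "Pow V"]) (auto simp: is_maximal_clique_def is_clique_def)

lemma n_Q_pos: "finite V \<Longrightarrow> 0 < n_Q V E"
  using clique_subset_maximal_clique[of V E "{}"] finite_maximal_cliques[of V E]
  by (auto simp: n_Q_def is_clique_def card_gt_0_iff)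

lemma maximal_clique_Diff:
  assumes "finite V" "is_maximal_clique (V - {v}) E D"
  shows "\<exists>Q. is_maximal_clique V E Q \<and> D = Q - {v}"
proof -
  have D: "is_clique (V - {v}) E D" using assms(2) by (simp add: is_maximal_clique_def)
  then have "is_clique V E D" by (auto simp: is_clique_def)
  then obtain Q where Q: "is_maximal_clique V E Q" "D \<subseteq> Q"
    using clique_subset_maximal_clique[OF assms(1)] by blast
  then have "is_clique (V - {v}) E (Q - {v})" "D \<subseteq> Q - {v}"
    using D by (auto simp: is_maximal_clique_def is_clique_def)
  with assms(2) have "D = Q - {v}" unfolding is_maximal_clique_def by blast
  with Q show ?thesis by blast
qed

lemma n_Q_Diff_le:
  assumes "finite V"
  shows "n_Q (V - {v}) E \<le> n_Q V E"
proof -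
  let ?M = "{Q. is_maximal_clique V E Q}"
  have "{D. is_maximal_clique (V - {v}) E D} \<subseteq> (\<lambda>Q. Q - {v}) ` ?M"
    using maximal_clique_Diff[OF assms] by blast
  then have "n_Q (V - {v}) E \<le> card ((\<lambda>Q. Q - {v}) ` ?M)"
    unfolding n_Q_def using finite_maximal_cliques[OF assms] by (intro card_mono) auto
  also have "\<dots> \<le> n_Q V E"
    unfolding n_Q_def using finite_maximal_cliques[OF assms] by (rule card_image_le)
  finally show ?thesis .
qed

lemma n_Q_Diff_less:
  assumes "finite V" "is_maximal_clique V E Q"
    and "\<not> is_maximal_clique (V - {v}) E (Q - {v})"
  shows "n_Q (V - {v}) E < n_Q V E"
proof -
  let ?M = "{Q. is_maximal_clique V E Q}"
  have fin: "finite (?M - {Q})" using finite_maximal_cliques[OF assms(1)] by blast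
  have "{D. is_maximal_clique (V - {v}) E D} \<subseteq> (\<lambda>Q. Q - {v}) ` (?M - {Q})"
    using maximal_clique_Diff[OF assms(1)] assms(3) by blast
  then have "n_Q (V - {v}) E \<le> card ((\<lambda>Q. Q - {v}) ` (?M - {Q}))"
    unfolding n_Q_def using fin by (intro card_mono) auto
  also have "\<dots> \<le> card (?M - {Q})"
    using fin by (rule card_image_le)
  also have "\<dots> < n_Q V E"
    unfolding n_Q_def using finite_maximal_cliques[OF assms(1)] assms(2)
    by (intro psubset_card_mono) auto
  finally show ?thesis .
qed

lemma maximal_clique_closed_nbhd:
  assumes "is_clique V E (closed_nbhd V E v)"
  shows "is_maximal_clique V E (closed_nbhd V E v)"
proof -
  have "D \<subseteq> closed_nbhd V E v" if "is_clique V E D" "closed_nbhd V E v \<subseteq> D" for D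
  proof
    fix d assume "d \<in> D"
    moreover have "v \<in> D" using that(2) by (auto simp: closed_nbhd_def)
    ultimately show "d \<in> closed_nbhd V E v"
      using that(1) by (auto simp: is_clique_def closed_nbhd_iff)
  qed
  with assms show ?thesis unfolding is_maximal_clique_def by blast
qed

lemma is_clique_closed_nbhd_degree_le_1:
  "symp E \<Longrightarrow> v \<in> V \<Longrightarrow> open_nbhd V E v \<subseteq> {p} \<Longrightarrow> is_clique V E (closed_nbhd V E v)"
  by (auto simp: is_clique_def closed_nbhd_def open_nbhd_def dest: sympD)

lemma n_Q_Diff_less_simplicial:
  assumes "finite V" "symp E" and clique: "is_clique V E (closed_nbhd V E v)"
    and x: "x \<in> V" "x \<notin> closed_nbhd V E v" and adj: "\<forall>a\<in>open_nbhd V E v. E a x"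
  shows "n_Q (V - {v}) E < n_Q V E"
proof (rule n_Q_Diff_less[OF assms(1) maximal_clique_closed_nbhd[OF clique]])
  let ?D = "insert x (closed_nbhd V E v - {v})"
  have "E b x" "E x b" if "b \<in> closed_nbhd V E v - {v}" for b
    using that adj assms(2) by (auto simp: closed_nbhd_def open_nbhd_def dest: sympD)
  moreover have "x \<noteq> v" "closed_nbhd V E v \<subseteq> V"
    using x clique by (auto simp: closed_nbhd_def is_clique_def)
  ultimately have "is_clique (V - {v}) E ?D"
    using clique x(1) unfolding is_clique_def by blast
  moreover have "x \<notin> closed_nbhd V E v - {v}" using x(2) by blast
  ultimately show "\<not> is_maximal_clique (V - {v}) E (closed_nbhd V E v - {v})"
    unfolding is_maximal_clique_def by blast
qed

section \<open>Extending a twin-ID-code across a vertex deletion\<close>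

text \<open>
  A graph is the subgraph of E induced on V: the notions of Defs only consult edges inside V,
  so deleting v from the graph amounts to deleting it from V.
\<close>

locale vertex_deletion =
  fixes V :: "'a set" and E :: "'a \<Rightarrow> 'a \<Rightarrow> bool" and v :: 'a
  assumes finite_V: "finite V" and sym_E: "symp E" and vertex: "v \<in> V"
begin

abbreviation N :: "'a \<Rightarrow> 'a set" where "N \<equiv> closed_nbhd V E"
abbreviation N' :: "'a \<Rightarrow> 'a set" where "N' \<equiv> closed_nbhd (V - {v}) E"

text \<open>f recovers the trace N' y \<inter> C in G - v of each vertex y \<noteq> v from its trace N y \<inter> C' in G.\<close>

lemma twin_id_code_extend:
  assumes code: "twin_id_code (V - {v}) E C" and "C' \<subseteq> V"
    and decode: "\<And>y. y \<in> V - {v} \<Longrightarrow> N' y \<inter> C = f (N y \<inter> C')" and "f {} = {}"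
    and v_mem: "\<And>y z. y \<in> V - {v} \<Longrightarrow> z \<in> V - {v} \<Longrightarrow> N y \<inter> C' = N z \<inter> C' \<Longrightarrow>
      N' y = N' z \<Longrightarrow> v \<in> N y \<longleftrightarrow> v \<in> N z"
    and "N v \<inter> C' \<noteq> {}"
    and sep_v: "\<And>y. y \<in> V - {v} \<Longrightarrow> N y \<inter> C' = N v \<inter> C' \<Longrightarrow> N y = N v"
  shows "twin_id_code V E C'"
  unfolding twin_id_code_def
proof (intro conjI ballI impI)
  fix u assume "u \<in> V"
  show "N u \<inter> C' \<noteq> {}"
  proof (cases "u = v")
    case False
    with \<open>u \<in> V\<close> have "N' u \<inter> C \<noteq> {}"
      by (intro twin_id_code_dominating[OF code]) simp
    with \<open>u \<in> V\<close> False have "f (N u \<inter> C') \<noteq> {}"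
      using decode by simp
    with \<open>f {} = {}\<close> show ?thesis by auto
  qed (use \<open>N v \<inter> C' \<noteq> {}\<close> in simp)
next
  have to_v: "N y = N v" if "y \<in> V" "N y \<inter> C' = N v \<inter> C'" for y
  proof (cases "y = v")
    case False
    with that show ?thesis by (intro sep_v) simp_all
  qed simp
  fix u w assume "u \<in> V" "w \<in> V" and eq: "N u \<inter> C' = N w \<inter> C'"
  show "N u = N w"
  proof (cases "u = v \<or> w = v")
    case True
    with to_v[OF \<open>u \<in> V\<close>] to_v[OF \<open>w \<in> V\<close>] eq show ?thesis by metis
  next
    case False
    with \<open>u \<in> V\<close> \<open>w \<in> V\<close> have uw: "u \<in> V - {v}" "w \<in> V - {v}" by auto
    with decode eq have "N' u \<inter> C = N' w \<inter> C" by simp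
    with uw have "N' u = N' w" by (rule twin_id_code_separating[OF code])
    moreover from this have "v \<in> N u \<longleftrightarrow> v \<in> N w" by (rule v_mem[OF uw eq])
    ultimately show ?thesis
      by (rule closed_nbhd_eq_if_Diff_eq) (use False in simp_all)
  qed
qed (fact)

lemma twin_id_code_extend_twin:
  assumes "w \<in> V" "w \<noteq> v" "N w = N v" and code: "twin_id_code (V - {v}) E C"
  shows "twin_id_code V E C"
proof -
  have C: "C \<subseteq> V - {v}" using code by (rule twin_id_code_subset)
  have trace: "N' y \<inter> C = N y \<inter> C" if "y \<in> V - {v}" for y
    using C that by (auto simp: closed_nbhd_Diff)
  have v_iff_w: "v \<in> N y \<longleftrightarrow> w \<in> N' y" if "y \<in> V - {v}" for y
  proof -
    have "v \<in> N y \<longleftrightarrow> y \<in> N w"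
      using closed_nbhd_sym[OF sym_E vertex, of y] that assms(3) by simp
    also have "\<dots> \<longleftrightarrow> w \<in> N' y"
      using closed_nbhd_sym[OF sym_E assms(1), of y] that assms(2) by (simp add: closed_nbhd_Diff)
    finally show ?thesis .
  qed
  have sep: "N y = N z" if "y \<in> V - {v}" "z \<in> V - {v}" "N y \<inter> C = N z \<inter> C" for y z
  proof -
    have "N' y = N' z" using that trace by (intro twin_id_code_separating[OF code]) auto
    moreover have "v \<in> N y \<longleftrightarrow> v \<in> N z"
      using that(1,2) v_iff_w \<open>N' y = N' z\<close> by simp
    ultimately show ?thesis
      by (rule closed_nbhd_eq_if_Diff_eq) (use that(1,2) in simp_all)
  qed
  have w: "w \<in> V - {v}" using assms(1,2) by blast
  show ?thesis
  proof (rule twin_id_code_extend[OF code, where f = id])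
    show "C \<subseteq> V" using C by blast
    show "N' y \<inter> C = id (N y \<inter> C)" if "y \<in> V - {v}" for y
      using trace[OF that] by simp
    show "v \<in> N y \<longleftrightarrow> v \<in> N z"
      if "y \<in> V - {v}" "z \<in> V - {v}" "N y \<inter> C = N z \<inter> C" for y z
      using sep[OF that] by simp
    show "N v \<inter> C \<noteq> {}"
      using twin_id_code_dominating[OF code w] trace[OF w] assms(3) by simp
    show "N y = N v" if "y \<in> V - {v}" "N y \<inter> C = N v \<inter> C" for y
      using sep[OF that(1) w] that(2) assms(3) by simp
  qed simp
qed

lemma twin_id_code_extend_insert:
  assumes code: "twin_id_code (V - {v}) E C"
    and trace_neq: "\<And>y. y \<in> V - {v} \<Longrightarrow> v \<in> N y \<Longrightarrow> N' y \<inter> C \<noteq> N v \<inter> C"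
  shows "twin_id_code V E (insert v C)"
proof -
  have C: "C \<subseteq> V - {v}" using code by (rule twin_id_code_subset)
  have trace: "N' y \<inter> C = N y \<inter> insert v C - {v}" if "y \<noteq> v" for y
    using C that by (auto simp: closed_nbhd_Diff)
  show ?thesis
  proof (rule twin_id_code_extend[OF code, where f = "\<lambda>T. T - {v}"])
    show "insert v C \<subseteq> V" using C vertex by blast
    show "N' y \<inter> C = N y \<inter> insert v C - {v}" if "y \<in> V - {v}" for y
      using trace that by blast
    show "v \<in> N y \<longleftrightarrow> v \<in> N z" if "N y \<inter> insert v C = N z \<inter> insert v C" for y z
      using that by blast
    show "N v \<inter> insert v C \<noteq> {}" by (simp add: closed_nbhd_def)
    show "N y = N v" if "y \<in> V - {v}" "N y \<inter> insert v C = N v \<inter> insert v C" for y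
    proof -
      have "v \<in> N y" using that(2) by (auto simp: closed_nbhd_def)
      moreover have "N' y \<inter> C = N v \<inter> C"
        using trace[of y] that C by auto
      ultimately show ?thesis using trace_neq that(1) by blast
    qed
  qed simp
qed

lemma twin_id_code_extend_isolated:
  assumes "open_nbhd V E v = {}" and code: "twin_id_code (V - {v}) E C"
  shows "twin_id_code V E (insert v C)"
proof (rule twin_id_code_extend_insert[OF code])
  fix y assume "y \<in> V - {v}" "v \<in> N y"
  with closed_nbhd_sym[OF sym_E vertex, of y] assms(1) show "N' y \<inter> C \<noteq> N v \<inter> C"
    by (simp add: closed_nbhd_def)
qed

lemma n_Q_Diff_less_isolated:
  assumes "open_nbhd V E v = {}" "x \<in> V - {v}"
  shows "n_Q (V - {v}) E < n_Q V E"
proof (rule n_Q_Diff_less_simplicial[OF finite_V sym_E])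
  show "is_clique V E (N v)"
    using is_clique_closed_nbhd_degree_le_1[OF sym_E vertex] assms(1) by blast
qed (use assms in \<open>auto simp: closed_nbhd_def\<close>)

end

locale leaf_deletion = vertex_deletion +
  fixes p :: 'a
  assumes leaf_nbhd: "open_nbhd V E v = {p}" and leaf_ne: "p \<noteq> v"
begin

lemma leaf_neighbour: "p \<in> V - {v}" "E v p"
  using leaf_nbhd leaf_ne by (auto simp: open_nbhd_def)

lemma closed_nbhd_leaf: "N v = {v, p}"
  using leaf_nbhd by (simp add: closed_nbhd_def)

lemma leaf_mem_closed_nbhd_iff: "y \<in> V \<Longrightarrow> v \<in> N y \<longleftrightarrow> y = v \<or> y = p"
  using closed_nbhd_sym[OF sym_E vertex] closed_nbhd_leaf by auto

lemma exists_other_neighbour: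
  assumes "N p \<noteq> N v"
  obtains u where "u \<in> V - {v, p}" "E p u"
proof -
  have "{v, p} \<subseteq> N p"
    using leaf_neighbour sym_E vertex by (auto simp: closed_nbhd_iff dest: sympD)
  with assms closed_nbhd_leaf obtain u where "u \<in> N p" "u \<notin> {v, p}" by blast
  then show ?thesis using that by (auto simp: closed_nbhd_iff)
qed

lemma n_Q_Diff_less_leaf:
  assumes "N p \<noteq> N v"
  shows "n_Q (V - {v}) E < n_Q V E"
proof -
  obtain u where "u \<in> V - {v, p}" "E p u"
    using exists_other_neighbour[OF assms] .
  then show ?thesis
    using leaf_nbhd closed_nbhd_leaf
    by (intro n_Q_Diff_less_simplicial[OF finite_V sym_E
        is_clique_closed_nbhd_degree_le_1[OF sym_E vertex]]) auto
qed

lemma twin_id_code_extend_leaf: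
  assumes code: "twin_id_code (V - {v}) E C" and "N' p \<inter> C \<noteq> {p}"
  shows "twin_id_code V E (insert v C)"
proof (rule twin_id_code_extend_insert[OF code])
  fix y assume "y \<in> V - {v}" "v \<in> N y"
  then have "y = p" using leaf_mem_closed_nbhd_iff by blast
  have "N' p \<inter> C \<noteq> {}" by (rule twin_id_code_dominating[OF code leaf_neighbour(1)])
  moreover have "N v \<inter> C \<subseteq> {p}"
    using closed_nbhd_leaf twin_id_code_subset[OF code] by auto
  ultimately show "N' y \<inter> C \<noteq> N v \<inter> C"
    using assms(2) unfolding \<open>y = p\<close> by blast
qed

lemma twin_id_code_extend_neighbour:
  assumes code: "twin_id_code (V - {v}) E C" and trace_p: "N' p \<inter> C = {p}"
    and u: "u \<in> V - {v, p}" "E p u"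
    and no_twin: "\<And>x. x \<in> V - {v} \<Longrightarrow> N' x = N' p \<Longrightarrow> x = p"
  shows "twin_id_code V E (insert u C)"
proof -
  have C: "C \<subseteq> V - {v}" using code by (rule twin_id_code_subset)
  have "u \<in> N' p" using u by (simp add: closed_nbhd_iff)
  with trace_p u have "u \<notin> C" by blast
  have "p \<in> C" using trace_p by blast
  have trace: "N' y \<inter> C = N y \<inter> insert u C - {u}" if "y \<in> V - {v}" for y
    using C \<open>u \<notin> C\<close> that by (auto simp: closed_nbhd_Diff)
  have trace_v: "N v \<inter> insert u C = {p}"
    using closed_nbhd_leaf \<open>p \<in> C\<close> C u by auto
  show ?thesis
  proof (rule twin_id_code_extend[OF code, where f = "\<lambda>T. T - {u}"])
    show "insert u C \<subseteq> V" using C u by blast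
    show "N' y \<inter> C = N y \<inter> insert u C - {u}" if "y \<in> V - {v}" for y
      by (rule trace[OF that])
    show "v \<in> N y \<longleftrightarrow> v \<in> N z"
      if "y \<in> V - {v}" "z \<in> V - {v}" "N' y = N' z" for y z
    proof -
      have "y = p \<longleftrightarrow> z = p" using that no_twin by metis
      then show ?thesis using that(1,2) leaf_mem_closed_nbhd_iff by simp
    qed
    show "N v \<inter> insert u C \<noteq> {}" using trace_v by simp
    show "N y = N v" if "y \<in> V - {v}" "N y \<inter> insert u C = N v \<inter> insert u C" for y
    proof -
      have "N' y \<inter> C = N' p \<inter> C"
        using trace[OF that(1)] that(2) trace_v trace_p u by auto
      then have "N' y = N' p"
        using that(1) leaf_neighbour(1) by (intro twin_id_code_separating[OF code]) simp_all
      then have "y = p" using no_twin that(1) by blast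
      moreover have "u \<in> N p \<inter> insert u C" using u by (simp add: closed_nbhd_iff)
      ultimately show ?thesis using that(2) trace_v u by auto
    qed
  qed simp
qed

text \<open>p is traded for its twin x in G - v; the new code vertex v then tells p from x.\<close>

lemma twin_id_code_extend_swap:
  assumes code: "twin_id_code (V - {v}) E C" and trace_p: "N' p \<inter> C = {p}"
    and x: "x \<in> V - {v}" "x \<noteq> p" and twin: "N' x = N' p"
  shows "twin_id_code V E (insert v (insert x (C - {p})))" (is "twin_id_code V E ?C'")
proof -
  have C: "C \<subseteq> V - {v}" using code by (rule twin_id_code_subset)
  have "x \<in> N' x" by (simp add: closed_nbhd_def)
  with twin have "x \<in> N' p" by simp
  with trace_p x have "x \<notin> C" by blast
  have "p \<in> C" using trace_p by blast
  have x_iff_p: "x \<in> N' y \<longleftrightarrow> p \<in> N' y" if "y \<in> V - {v}" for y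
    using closed_nbhd_sym[OF sym_E x(1) that] closed_nbhd_sym[OF sym_E leaf_neighbour(1) that] twin
    by simp
  have decode: "N' y \<inter> C = (N y \<inter> ?C' - {v, x}) \<union> (if x \<in> N y \<inter> ?C' then {p} else {})"
    if "y \<in> V - {v}" for y
    using x_iff_p[OF that] that C \<open>x \<notin> C\<close> \<open>p \<in> C\<close> x by (auto simp: closed_nbhd_Diff)
  have trace_v: "N v \<inter> ?C' = {v}"
    using closed_nbhd_leaf x by auto
  show ?thesis
  proof (rule twin_id_code_extend[OF code _ decode])
    show "?C' \<subseteq> V" using C x vertex by blast
    show "N y = N v" if "y \<in> V - {v}" "N y \<inter> ?C' = N v \<inter> ?C'" for y
    proof -
      from that have "y = p" using trace_v leaf_mem_closed_nbhd_iff by auto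
      moreover have "x \<in> N p" using \<open>x \<in> N' p\<close> by (simp add: closed_nbhd_Diff leaf_ne)
      ultimately show ?thesis using that(2) trace_v x by auto
    qed
  qed (use trace_v in auto)
qed

lemma twin_id_code_extend_leaf_card:
  assumes code: "twin_id_code (V - {v}) E C" and "N p \<noteq> N v"
  shows "\<exists>C'. twin_id_code V E C' \<and> card C' \<le> card C + 1"
proof -
  have "finite C"
    using twin_id_code_subset[OF code] finite_V by (auto intro: finite_subset)
  consider (leaf) "N' p \<inter> C \<noteq> {p}"
    | (swap) x where "N' p \<inter> C = {p}" "x \<in> V - {v}" "x \<noteq> p" "N' x = N' p"
    | (neighbour) "N' p \<inter> C = {p}" "\<And>x. x \<in> V - {v} \<Longrightarrow> N' x = N' p \<Longrightarrow> x = p"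
    by blast
  then show ?thesis
  proof cases
    case leaf
    with code have "twin_id_code V E (insert v C)" by (rule twin_id_code_extend_leaf)
    with \<open>finite C\<close> show ?thesis by (intro exI[of _ "insert v C"]) (simp add: card_insert_if)
  next
    case (swap x)
    let ?C' = "insert v (insert x (C - {p}))"
    from code swap have "twin_id_code V E ?C'" by (rule twin_id_code_extend_swap)
    moreover have "card ?C' \<le> card (C - {p}) + 2"
      using \<open>finite C\<close> by (simp add: card_insert_if)
    moreover have "p \<in> C" using swap(1) by blast
    then have "card (C - {p}) + 1 = card C"
      using \<open>finite C\<close> card_gt_0_iff[of C] by (auto simp: card_Diff_singleton)
    ultimately show ?thesis by (intro exI[of _ ?C']) simp
  next
    case neighbour
    obtain u where "u \<in> V - {v, p}" "E p u"
      using exists_other_neighbour[OF assms(2)] .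
    with code neighbour have "twin_id_code V E (insert u C)"
      by (intro twin_id_code_extend_neighbour) auto
    with \<open>finite C\<close> show ?thesis by (intro exI[of _ "insert u C"]) (simp add: card_insert_if)
  qed
qed

end

context vertex_deletion
begin

lemma twin_id_code_extend_card:
  assumes "irreflp E"
    and twin_or_leaf: "(\<exists>w\<in>V. w \<noteq> v \<and> N w = N v) \<or> (\<exists>p. open_nbhd V E v \<subseteq> {p})"
    and code: "twin_id_code (V - {v}) E C" and card: "card C \<le> n_Q (V - {v}) E"
  shows "\<exists>C'. twin_id_code V E C' \<and> card C' \<le> n_Q V E"
proof -
  have "finite C"
    using twin_id_code_subset[OF code] finite_V by (auto intro: finite_subset)
  consider (twin) w where "w \<in> V" "w \<noteq> v" "N w = N v"
    | (isolated) "open_nbhd V E v = {}"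
    | (leaf) p where "open_nbhd V E v = {p}" "N p \<noteq> N v"
  proof -
    have "p \<in> V" "p \<noteq> v" if "open_nbhd V E v = {p}" for p
      using that \<open>irreflp E\<close> by (auto simp: open_nbhd_def dest: irreflpD)
    with twin_or_leaf that show thesis
      unfolding subset_singleton_iff by metis
  qed
  then show ?thesis
  proof cases
    case twin
    then show ?thesis
      using twin_id_code_extend_twin[OF twin code] card n_Q_Diff_le[OF finite_V, of v E]
      by (meson le_trans)
  next
    case isolated
    have "card (insert v C) \<le> n_Q V E"
    proof (cases "V - {v} = {}")
      case True
      then have "C = {}" using twin_id_code_subset[OF code] by blast
      then show ?thesis using n_Q_pos[OF finite_V, of E] by simp
    next
      case False
      then obtain x where "x \<in> V - {v}" by blast
      with isolated have "n_Q (V - {v}) E < n_Q V E" by (rule n_Q_Diff_less_isolated)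
      with card \<open>finite C\<close> show ?thesis by (simp add: card_insert_if)
    qed
    with twin_id_code_extend_isolated[OF isolated code] show ?thesis by blast
  next
    case (leaf p)
    interpret leaf_deletion V E v p
      using leaf(1) \<open>irreflp E\<close> by unfold_locales (auto simp: open_nbhd_def dest: irreflpD)
    obtain C' where "twin_id_code V E C'" "card C' \<le> card C + 1"
      using twin_id_code_extend_leaf_card[OF code leaf(2)] by blast
    moreover have "n_Q (V - {v}) E < n_Q V E"
      using leaf(2) by (rule n_Q_Diff_less_leaf)
    ultimately show ?thesis using card by (intro exI[of _ C']) simp
  qed
qed

end

lemma twin_id_code_card_le_n_Q:
  assumes "finite V" "symp E" "irreflp E" "cycle_neighbours_adjacent V E"
  shows "\<exists>C. twin_id_code V E C \<and> card C \<le> n_Q V E"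
  using assms(1,4)
proof (induction V rule: finite_remove_induct)
  case empty
  have "twin_id_code {} E {}" by (simp add: twin_id_code_def)
  then show ?case by (intro exI[of _ "{}"]) simp
next
  case (remove V)
  obtain v where "v \<in> V" and twin_or_leaf:
    "(\<exists>w\<in>V. w \<noteq> v \<and> closed_nbhd V E w = closed_nbhd V E v) \<or> (\<exists>p. open_nbhd V E v \<subseteq> {p})"
    using exists_twin_or_degree_le_1[OF remove(1,2) assms(2,3) remove.prems] by blast
  interpret vertex_deletion V E v
    using remove(1) assms(2) \<open>v \<in> V\<close> by unfold_locales
  obtain C where "twin_id_code (V - {v}) E C" "card C \<le> n_Q (V - {v}) E"
    using remove.IH[OF \<open>v \<in> V\<close>] cycle_neighbours_adjacent_mono[OF remove.prems] by blast
  with assms(3) twin_or_leaf show ?case by (rule twin_id_code_extend_card)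
qed

theorem theorem2p1:
  fixes V :: "'a set" and E :: "'a \<Rightarrow> 'a \<Rightarrow> bool"
  assumes "block_graph V E"
    and "identifiable V E"
  shows "gamma_ID V E \<le> n_Q V E"
proof -
  have "finite V" "symp E" "irreflp E"
    using assms(1) by (auto simp: block_graph_def simple_graph_def symp_def irreflp_def)
  with block_graph_cycle_neighbours_adjacent[OF assms(1)] obtain C
    where "twin_id_code V E C" "card C \<le> n_Q V E"
    using twin_id_code_card_le_n_Q by blast
  moreover from assms(2) this(1) have "is_id_code V E C"
    by (rule is_id_code_if_twin_id_code)
  then have "gamma_ID V E \<le> card C"
    unfolding gamma_ID_def by (blast intro: Least_le)
  ultimately show ?thesis by simp
qed

end
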